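(* Let $J:[0,1]\to[0,\infty)$ with $\int_{\mathbb{Z}_p}J(|x|_p)dx=1$, extended by zero outside $\mathbb{Z}_p$, and let $\widehat J(|\xi|_p)$ be its Fourier transform (a radial function of $\xi\in\mathbb{Q}_p$). For $t>0$ let $\boldsymbol{J}(Z_0(x,t)):=\mathcal{F}^{-1}_{\xi\to x}\big(\{\widehat J(|\xi|_p)-1\}e^{-t(1-\widehat J(|\xi|_p))}\big)\in\mathcal{D}'(\mathbb{Z}_p)$. Then for $x\in\mathbb{Z}_p\smallsetminus\{0\}$ and $t>0$, $\boldsymbol{J}(Z_0(x,t))=\sum_{j=1}^{\infty}e^{-t(1-\widehat J(p^j))}(\widehat J(p^j)-1)\{p^j\Omega(p^j|x|_p)-p^{j-1}\Omega(p^{j-1}|x|_p)\}$, where $\widehat J(p^j)$ denotes the value of $\widehat J$ at $|\xi|_p=p^j$.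
   Context: $p$ is a fixed prime; Haar measure normalized by $\int_{\mathbb{Z}_p}dx=1$; $\chi_p(y)=\exp(2\pi i\{y\}_p)$; Fourier transform $\mathcal{F}\varphi(\xi)=\int_{\mathbb{Q}_p}\chi_p(\xi x)\varphi(x)dx$, extended to distributions $\mathcal{D}'(\mathbb{Q}_p)$ by duality; $\mathcal{F}^{-1}$ its inverse. $\Omega(p^{-r}|x-a|_p)$ is the characteristic function of $\{|x-a|_p\le p^r\}$. The function $\xi\mapsto\{\widehat J(|\xi|_p)-1\}e^{-t(1-\widehat J(|\xi|_p))}$ is locally constant, bounded, and invariant under translation by $\mathbb{Z}_p$, so its inverse Fourier transform is a distribution supported in $\mathbb{Z}_p$; the identity is an identity of this distribution restricted to $\mathbb{Z}_p\smallsetminus\{0\}$. *)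

theory Defs
  imports "HOL-Analysis.Analysis" "HOL-Computational_Algebra.Factorial_Ring"
begin

definition padic_val_rat :: "nat \<Rightarrow> rat \<Rightarrow> int" where
  "padic_val_rat p q = (case quotient_of q of (a, b) \<Rightarrow>
      int (multiplicity (int p) a) - int (multiplicity (int p) b))"

definition padic_norm_rat :: "nat \<Rightarrow> rat \<Rightarrow> real" where
  "padic_norm_rat p q = (if q = 0 then 0 else real p powr (- real_of_int (padic_val_rat p q)))"

definition padic_cauchy :: "nat \<Rightarrow> (nat \<Rightarrow> rat) \<Rightarrow> bool" where
  "padic_cauchy p X = (\<forall>e>0. \<exists>N. \<forall>m\<ge>N. \<forall>n\<ge>N. padic_norm_rat p (X m - X n) < e)"

definition padic_null :: "nat \<Rightarrow> (nat \<Rightarrow> rat) \<Rightarrow> bool" where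
  "padic_null p X = (\<forall>e>0. \<exists>N. \<forall>n\<ge>N. padic_norm_rat p (X n) < e)"

definition qp_cls :: "nat \<Rightarrow> (nat \<Rightarrow> rat) \<Rightarrow> (nat \<Rightarrow> rat) set" where
  "qp_cls p X = {Y. padic_cauchy p Y \<and> padic_null p (\<lambda>n. X n - Y n)}"

typedef (overloaded) 'p qp = "{S. \<exists>X. padic_cauchy CARD('p::finite) X \<and> S = qp_cls CARD('p) X}"
  by (rule exI[of _ "qp_cls CARD('p) (\<lambda>n. 0)"], rule CollectI, rule exI[of _ "\<lambda>n. 0"])
     (simp add: padic_cauchy_def padic_norm_rat_def)

definition qp_rep :: "'p::finite qp \<Rightarrow> nat \<Rightarrow> rat" where
  "qp_rep x = (SOME X. X \<in> Rep_qp x)"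

definition qp_mk :: "(nat \<Rightarrow> rat) \<Rightarrow> 'p::finite qp" where
  "qp_mk X = Abs_qp (qp_cls CARD('p) X)"

definition qp_of_rat :: "rat \<Rightarrow> 'p::finite qp" where
  "qp_of_rat q = qp_mk (\<lambda>n. q)"

instantiation qp :: (finite) "{zero, one, plus, minus, uminus, times}"
begin
definition "zero_qp = (qp_of_rat 0 :: 'a qp)"
definition "one_qp = (qp_of_rat 1 :: 'a qp)"
definition "plus_qp (x::'a qp) (y::'a qp) = (qp_mk (\<lambda>n. qp_rep x n + qp_rep y n) :: 'a qp)"
definition "minus_qp (x::'a qp) (y::'a qp) = (qp_mk (\<lambda>n. qp_rep x n - qp_rep y n) :: 'a qp)"
definition "uminus_qp (x::'a qp) = (qp_mk (\<lambda>n. - qp_rep x n) :: 'a qp)"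
definition "times_qp (x::'a qp) (y::'a qp) = (qp_mk (\<lambda>n. qp_rep x n * qp_rep y n) :: 'a qp)"
instance ..
end

definition qp_norm :: "'p::finite qp \<Rightarrow> real" where
  "qp_norm x = lim (\<lambda>n. padic_norm_rat CARD('p) (qp_rep x n))"

definition frac_rat :: "nat \<Rightarrow> rat \<Rightarrow> rat" where
  "frac_rat p q = (THE r. 0 \<le> r \<and> r < 1 \<and> (\<exists>(a::int) (k::nat). r = of_int a / of_nat p ^ k)
                          \<and> padic_norm_rat p (q - r) \<le> 1)"

definition qp_frac :: "'p::finite qp \<Rightarrow> rat" where
  "qp_frac x = (THE r. eventually (\<lambda>n. frac_rat CARD('p) (qp_rep x n) = r) sequentially)"

definition chi_p :: "'p::finite qp \<Rightarrow> complex" where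
  "chi_p y = cis (2 * pi * real_of_rat (qp_frac y))"

text \<open>Haar integral (normalised so that the integral over Z_p is 1), as the limit of
  the Riemann sums over the coset representatives a/p^n (0 <= a < p^(2n)) of
  p^n Z_p in p^(-n) Z_p; each coset has Haar measure p^(-n).  For locally
  constant compactly supported functions (and for the radial integrable functions
  used below) this is the Haar integral.\<close>
definition qp_int :: "('p::finite qp \<Rightarrow> complex) \<Rightarrow> complex" where
  "qp_int f = lim (\<lambda>n. \<Sum>a<CARD('p) ^ (2 * n).
       f (qp_of_rat (of_nat a / of_nat CARD('p) ^ n)) / of_nat CARD('p) ^ n)"

definition qp_test :: "('p::finite qp \<Rightarrow> complex) \<Rightarrow> bool" where
  "qp_test \<phi> = (\<exists>(m::int) (l::int).
      (\<forall>x. real CARD('p) powr m < qp_norm x \<longrightarrow> \<phi> x = 0) \<and>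
      (\<forall>x y. qp_norm (x - y) \<le> real CARD('p) powr (- l) \<longrightarrow> \<phi> x = \<phi> y))"

definition qp_ft :: "('p::finite qp \<Rightarrow> complex) \<Rightarrow> 'p qp \<Rightarrow> complex" where
  "qp_ft \<phi> \<xi> = qp_int (\<lambda>x. chi_p (\<xi> * x) * \<phi> x)"

definition qp_ift :: "('p::finite qp \<Rightarrow> complex) \<Rightarrow> 'p qp \<Rightarrow> complex" where
  "qp_ift \<phi> \<xi> = qp_int (\<lambda>x. chi_p (- (\<xi> * x)) * \<phi> x)"

definition Omega :: "real \<Rightarrow> complex" where
  "Omega r = (if r \<le> 1 then 1 else 0)"

definition Jhat :: "(real \<Rightarrow> real) \<Rightarrow> 'p::finite qp \<Rightarrow> complex" where
  "Jhat J \<xi> = qp_ft (\<lambda>x. if qp_norm x \<le> 1 then complex_of_real (J (qp_norm x)) else 0) \<xi>"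

text \<open>The value of \<^emph>\<open>J\<close>-hat at |xi|_p = p^j, taken at xi = p^(-j)\<close>
definition Jhat_at :: "(real \<Rightarrow> real) \<Rightarrow> 'p::finite itself \<Rightarrow> nat \<Rightarrow> complex" where
  "Jhat_at J _ j = Jhat J (qp_of_rat (1 / of_nat CARD('p) ^ j) :: 'p qp)"

text \<open>The distribution J(Z_0(.,t)) = F^{-1}[(Jhat - 1) e^{-t(1 - Jhat)}], given by its
  action on test functions: <F^{-1} T, phi> = <T, F^{-1} phi>\<close>
definition JZ0 :: "(real \<Rightarrow> real) \<Rightarrow> real \<Rightarrow> ('p::finite qp \<Rightarrow> complex) \<Rightarrow> complex" where
  "JZ0 J t \<phi> = qp_int (\<lambda>\<xi>. (Jhat J \<xi> - 1) * exp (- (complex_of_real t * (1 - Jhat J \<xi>)))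
                             * qp_ift \<phi> \<xi>)"

end

theory Submission
  imports Defs "HOL-Computational_Algebra.Squarefree"
begin

text \<open>Both sides are Haar integrals, i.e. limits of Riemann sums over the points \<open>a/p^n\<close>.
  A test function supported in \<open>Z_p - {0}\<close> is, at these points, supported in \<open>Z_p\<close>, vanishes
  on \<open>p^L Z\<close> and is \<open>p^L\<close>-periodic; so for \<open>n \<ge> L\<close> its inverse Fourier transform at \<open>a/p^n\<close> is
  a discrete Fourier transform over \<open>Z/p^n\<close>.  The multiplier \<open>(Jhat - 1) e^(-t(1 - Jhat))\<close>
  vanishes on \<open>Z_p\<close>, where \<open>Jhat = 1\<close>, and is radial elsewhere, since multiplication by a unit
  permutes \<open>Z/p^m\<close> without changing valuations.  It is therefore a combination of indicators of
  the balls \<open>p^s Z_p\<close>, whose discrete Fourier transforms are again multiples of indicators of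
  balls.  Exchanging the finite sums turns the Riemann sum of the left-hand side into that of the
  series, which at an integer \<open>c \<noteq> 0\<close> has only finitely many nonzero terms: the two Riemann
  sums agree for all \<open>n \<ge> L\<close>.\<close>

section \<open>The p-adic absolute value on the rationals\<close>

lemma rat_cases_int_fraction:
  fixes x :: rat
  obtains a b :: int where "b > 0" "x = of_int a / of_int b"
proof -
  obtain a b where q: "quotient_of x = (a, b)" by (cases "quotient_of x") auto
  show thesis by (rule that[OF quotient_of_denom_pos[OF q] quotient_of_div[OF q]])
qed

lemma multiplicity_add_ge_min:
  fixes x y :: "'a :: factorial_semiring"
  assumes "\<not> is_unit p" and "x + y \<noteq> 0"
  shows "min (multiplicity p x) (multiplicity p y) \<le> multiplicity p (x + y)"
proof -
  let ?m = "min (multiplicity p x) (multiplicity p y)"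
  have "p ^ ?m dvd x" "p ^ ?m dvd y" by (simp_all add: multiplicity_dvd')
  then have "p ^ ?m dvd x + y" by simp
  with assms show ?thesis by (intro multiplicity_geI)
qed

lemma multiplicity_of_nat: "multiplicity (int p) (int c) = multiplicity p c"
  by (simp add: multiplicity_def flip: of_nat_power)

lemma padic_norm_rat_zero [simp]: "padic_norm_rat p 0 = 0"
  by (simp add: padic_norm_rat_def)

lemma padic_norm_rat_nonneg: "padic_norm_rat p x \<ge> 0"
  by (simp add: padic_norm_rat_def)

locale padic_prime =
  fixes p :: nat
  assumes prime_p: "prime p"
begin

lemma p_pos: "p > 0"
  using prime_p prime_gt_0_nat by blast

lemma p_gt_1: "real p > 1"
  using prime_p prime_gt_1_nat by simp

lemma p_not_unit: "\<not> is_unit p"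
  using prime_p not_prime_unit by blast

lemma prime_elem_int_p: "prime_elem (int p)"
  using prime_p by simp

lemma int_p_not_unit: "\<not> is_unit (int p)"
  using prime_elem_not_unit prime_elem_int_p by blast

lemma power_dvd_iff_le_multiplicity_p:
  "c \<noteq> 0 \<Longrightarrow> p ^ k dvd c \<longleftrightarrow> k \<le> multiplicity p c"
  by (rule power_dvd_iff_le_multiplicity[OF _ p_not_unit])

lemma padic_val_rat_fraction:
  assumes a: "a \<noteq> 0" and b: "b \<noteq> 0"
  shows "padic_val_rat p (of_int a / of_int b) =
         int (multiplicity (int p) a) - int (multiplicity (int p) b)"
proof -
  obtain a' b' where q: "quotient_of (of_int a / of_int b) = (a', b')"
    by (cases "quotient_of (of_int a / of_int b)") auto
  have b'_pos: "b' > 0" using quotient_of_denom_pos q by blast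
  have eq: "(of_int a / of_int b :: rat) = of_int a' / of_int b'" using quotient_of_div q by blast
  then have "a * b' = a' * b" using b b'_pos
    by (simp add: field_simps) (metis of_int_eq_iff of_int_mult)
  moreover have "a' \<noteq> 0" using eq a b by auto
  ultimately have "multiplicity (int p) a + multiplicity (int p) b' =
                   multiplicity (int p) a' + multiplicity (int p) b"
    using a b b'_pos prime_elem_int_p by (metis less_irrefl prime_elem_multiplicity_mult_distrib)
  then show ?thesis unfolding padic_val_rat_def q by simp
qed

lemma padic_norm_rat_fraction:
  assumes "a \<noteq> 0" and "b \<noteq> 0"
  shows "padic_norm_rat p (of_int a / of_int b) =
         real p powr (real (multiplicity (int p) b) - real (multiplicity (int p) a))"
  using assms by (simp add: padic_norm_rat_def padic_val_rat_fraction)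

lemma padic_norm_rat_of_int:
  "a \<noteq> 0 \<Longrightarrow> padic_norm_rat p (of_int a) = real p powr (- real (multiplicity (int p) a))"
  using padic_norm_rat_fraction[of a 1] by simp

lemma padic_norm_rat_of_int_le_1: "padic_norm_rat p (of_int a) \<le> 1"
proof (cases "a = 0")
  case False
  have "real p powr (- real (multiplicity (int p) a)) \<le> real p powr 0"
    using p_gt_1 by (intro powr_mono) auto
  then show ?thesis using padic_norm_rat_of_int[OF False] p_pos by simp
qed simp

lemma padic_norm_rat_pos: "x \<noteq> 0 \<Longrightarrow> padic_norm_rat p x > 0"
  using p_pos by (simp add: padic_norm_rat_def)

lemma padic_norm_rat_mult:
  "padic_norm_rat p (x * y) = padic_norm_rat p x * padic_norm_rat p y"
proof (cases "x = 0 \<or> y = 0")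
  case False
  obtain a b where ab: "b > 0" "x = of_int a / of_int b" by (rule rat_cases_int_fraction)
  obtain c d where cd: "d > 0" "y = of_int c / of_int d" by (rule rat_cases_int_fraction)
  have a: "a \<noteq> 0" and c: "c \<noteq> 0" using False ab cd by auto
  let ?v = "multiplicity (int p)"
  have xy: "x * y = of_int (a * c) / of_int (b * d)" using ab cd by simp
  have m: "?v (a * c) = ?v a + ?v c" "?v (b * d) = ?v b + ?v d"
    using a c ab cd prime_elem_int_p by (auto intro: prime_elem_multiplicity_mult_distrib)
  have "padic_norm_rat p (x * y) = real p powr (real (?v (b * d)) - real (?v (a * c)))"
    unfolding xy using a c ab cd by (intro padic_norm_rat_fraction) auto
  also have "\<dots> = real p powr (real (?v b) - real (?v a)) * real p powr (real (?v d) - real (?v c))"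
    unfolding m by (simp add: powr_add[symmetric] algebra_simps)
  also have "\<dots> = padic_norm_rat p x * padic_norm_rat p y"
    using a c ab cd by (simp add: padic_norm_rat_fraction)
  finally show ?thesis .
qed auto

lemma padic_norm_rat_add_le_max:
  "padic_norm_rat p (x + y) \<le> max (padic_norm_rat p x) (padic_norm_rat p y)"
proof (cases "x = 0 \<or> y = 0 \<or> x + y = 0")
  case True
  then show ?thesis using padic_norm_rat_nonneg[of p] by (auto simp: le_max_iff_disj)
next
  case False
  obtain a b where ab: "b > 0" "x = of_int a / of_int b" by (rule rat_cases_int_fraction)
  obtain c d where cd: "d > 0" "y = of_int c / of_int d" by (rule rat_cases_int_fraction)
  have a: "a \<noteq> 0" and c: "c \<noteq> 0" using False ab cd by auto
  have xy: "x + y = of_int (a * d + c * b) / of_int (b * d)" using ab cd by (simp add: field_simps)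
  have s: "a * d + c * b \<noteq> 0" using False xy by (metis div_0 of_int_0)
  let ?v = "multiplicity (int p)"
  have m: "?v (a * d) = ?v a + ?v d" "?v (c * b) = ?v c + ?v b" "?v (b * d) = ?v b + ?v d"
    using a c ab cd prime_elem_int_p by (auto intro: prime_elem_multiplicity_mult_distrib)
  have ge: "min (?v (a * d)) (?v (c * b)) \<le> ?v (a * d + c * b)"
    by (rule multiplicity_add_ge_min[OF int_p_not_unit s])
  have "padic_norm_rat p (x + y) = real p powr (real (?v b + ?v d) - real (?v (a * d + c * b)))"
    unfolding xy using ab cd s m(3) by (subst padic_norm_rat_fraction) auto
  also have "\<dots> \<le> max (real p powr (real (?v b) - real (?v a))) (real p powr (real (?v d) - real (?v c)))"
  proof (cases "?v (a * d) \<le> ?v (c * b)")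
    case True
    then have "real p powr (real (?v b + ?v d) - real (?v (a * d + c * b))) \<le>
               real p powr (real (?v b) - real (?v a))"
      using ge m p_gt_1 by (intro powr_mono) auto
    then show ?thesis by simp
  next
    case False
    then have "real p powr (real (?v b + ?v d) - real (?v (a * d + c * b))) \<le>
               real p powr (real (?v d) - real (?v c))"
      using ge m p_gt_1 by (intro powr_mono) auto
    then show ?thesis by simp
  qed
  also have "\<dots> = max (padic_norm_rat p x) (padic_norm_rat p y)"
    using ab cd a c by (simp add: padic_norm_rat_fraction)
  finally show ?thesis .
qed

lemma padic_norm_rat_add_le: "padic_norm_rat p (x + y) \<le> padic_norm_rat p x + padic_norm_rat p y"
  using padic_norm_rat_add_le_max[of x y] padic_norm_rat_nonneg[of p x] padic_norm_rat_nonneg[of p y]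
  by linarith

lemma padic_norm_rat_minus: "padic_norm_rat p (- x) = padic_norm_rat p x"
proof (cases "x = 0")
  case False
  obtain a b where ab: "b > 0" "x = of_int a / of_int b" by (rule rat_cases_int_fraction)
  then have "padic_norm_rat p (- x) = padic_norm_rat p (of_int (- a) / of_int b)" by simp
  also have "\<dots> = padic_norm_rat p (of_int a / of_int b)"
    using ab False by (subst (1 2) padic_norm_rat_fraction) auto
  finally show ?thesis using ab by simp
qed simp

lemma padic_norm_rat_commute: "padic_norm_rat p (x - y) = padic_norm_rat p (y - x)"
  using padic_norm_rat_minus[of "y - x"] by simp

lemma padic_norm_rat_diff_abs_le:
  "\<bar>padic_norm_rat p x - padic_norm_rat p y\<bar> \<le> padic_norm_rat p (x - y)"
  using padic_norm_rat_add_le[of "x - y" y] padic_norm_rat_add_le[of "y - x" x]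
        padic_norm_rat_commute[of x y] by simp

lemma padic_norm_rat_le_1_imp_dvd:
  assumes le: "padic_norm_rat p (of_int d / of_nat p ^ K) \<le> 1"
  shows "int p ^ K dvd d"
proof (cases "d = 0")
  case False
  have "padic_norm_rat p (of_int d / of_int (int p ^ K)) =
        real p powr (real K - real (multiplicity (int p) d))"
    using False p_pos prime_elem_int_p by (subst padic_norm_rat_fraction) auto
  with le p_pos have "real p powr (real K - real (multiplicity (int p) d)) \<le> real p powr 0"
    by simp
  then have "K \<le> multiplicity (int p) d" by (simp only: powr_le_cancel_iff[OF p_gt_1])
  then show ?thesis by (rule multiplicity_dvd')
qed simp

lemma padic_norm_rat_of_nat_fraction_le_1_iff:
  "padic_norm_rat p (of_nat a / of_nat p ^ n) \<le> 1 \<longleftrightarrow> p ^ n dvd a"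
proof
  assume "padic_norm_rat p (of_nat a / of_nat p ^ n) \<le> 1"
  then have "int p ^ n dvd int a" using padic_norm_rat_le_1_imp_dvd[of "int a" n] by simp
  then show "p ^ n dvd a" by (metis of_nat_dvd_iff of_nat_power)
next
  assume "p ^ n dvd a"
  then obtain k where "a = p ^ n * k" by blast
  then have "(of_nat a / of_nat p ^ n :: rat) = of_int (int k)" using p_pos by simp
  then show "padic_norm_rat p (of_nat a / of_nat p ^ n) \<le> 1"
    using padic_norm_rat_of_int_le_1[of "int k"] by simp
qed

end

section \<open>Fractional parts and p-adic null sequences\<close>

lemma padic_null_cong: "padic_null p X \<Longrightarrow> (\<And>n. Y n = X n) \<Longrightarrow> padic_null p Y"
  by (simp add: padic_null_def)

lemma padic_null_zero: "padic_null p (\<lambda>n. 0)"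
  by (simp add: padic_null_def)

definition frac_rat_spec :: "nat \<Rightarrow> rat \<Rightarrow> rat \<Rightarrow> bool" where
  "frac_rat_spec p q r \<longleftrightarrow> 0 \<le> r \<and> r < 1 \<and> (\<exists>(a::int) (k::nat). r = of_int a / of_nat p ^ k)
                          \<and> padic_norm_rat p (q - r) \<le> 1"

context padic_prime
begin

lemma frac_rat_spec_unique:
  assumes r1: "frac_rat_spec p q r1" and r2: "frac_rat_spec p q r2"
  shows "r1 = r2"
proof -
  obtain a1 k1 where a1: "r1 = of_int a1 / of_nat p ^ k1" using r1 unfolding frac_rat_spec_def by blast
  obtain a2 k2 where a2: "r2 = of_int a2 / of_nat p ^ k2" using r2 unfolding frac_rat_spec_def by blast
  have "padic_norm_rat p (r1 - r2) \<le> max (padic_norm_rat p (q - r1)) (padic_norm_rat p (q - r2))"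
    using padic_norm_rat_add_le_max[of "r1 - q" "q - r2"] padic_norm_rat_commute[of r1 q] by simp
  then have "padic_norm_rat p (r1 - r2) \<le> 1"
    using r1 r2 unfolding frac_rat_spec_def by (meson max.boundedI order_trans)
  moreover have "r1 - r2 = of_int (a1 * int p ^ k2 - a2 * int p ^ k1) / of_nat p ^ (k1 + k2)"
    unfolding a1 a2 using p_pos by (simp add: field_simps power_add)
  ultimately have "int p ^ (k1 + k2) dvd a1 * int p ^ k2 - a2 * int p ^ k1"
    by (intro padic_norm_rat_le_1_imp_dvd) simp
  then obtain z where "a1 * int p ^ k2 - a2 * int p ^ k1 = int p ^ (k1 + k2) * z" by blast
  with \<open>r1 - r2 = _\<close> have rz: "r1 - r2 = of_int z" using p_pos by simp
  have "-1 < r1 - r2" "r1 - r2 < 1" using r1 r2 unfolding frac_rat_spec_def by auto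
  then have "z = 0" unfolding rz by linarith
  with rz show ?thesis by simp
qed

lemma frac_rat_eqI:
  assumes "frac_rat_spec p q r"
  shows "frac_rat p q = r"
proof -
  have "frac_rat p q = (THE r. frac_rat_spec p q r)"
    by (simp add: frac_rat_def frac_rat_spec_def)
  also have "\<dots> = r" using assms frac_rat_spec_unique by blast
  finally show ?thesis .
qed

lemma frac_rat_spec_fraction:
  "frac_rat_spec p (of_int c / of_nat p ^ M) (of_int (c mod int p ^ M) / of_nat p ^ M)"
proof -
  let ?m = "int p ^ M"
  have m_pos: "?m > 0" and pM: "(of_nat p ^ M :: rat) > 0" using p_pos by simp_all
  have "c mod ?m < ?m" using m_pos by simp
  then have "(of_int (c mod ?m) :: rat) < of_nat p ^ M"
    by (metis of_int_less_iff of_int_of_nat_eq of_int_power)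
  then have lt: "of_int (c mod ?m) / of_nat p ^ M < (1::rat)" using pM by (simp add: divide_less_eq)
  have "(of_int c :: rat) = of_int (?m * (c div ?m) + c mod ?m)" by simp
  also have "\<dots> = of_nat p ^ M * of_int (c div ?m) + of_int (c mod ?m)"
    by (simp only: of_int_add of_int_mult of_int_power of_int_of_nat_eq)
  finally have "of_int c / of_nat p ^ M - of_int (c mod ?m) / of_nat p ^ M = (of_int (c div ?m) :: rat)"
    using pM by (simp add: field_simps)
  then have "padic_norm_rat p (of_int c / of_nat p ^ M - of_int (c mod ?m) / of_nat p ^ M) \<le> 1"
    using padic_norm_rat_of_int_le_1 by simp
  with lt m_pos show ?thesis unfolding frac_rat_spec_def by auto
qed

lemma frac_rat_spec_near:
  assumes "frac_rat_spec p q r" and "padic_norm_rat p (x - q) \<le> 1"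
  shows "frac_rat_spec p x r"
  using assms padic_norm_rat_add_le_max[of "x - q" "q - r"] unfolding frac_rat_spec_def by auto

lemma padic_null_add:
  assumes X: "padic_null p X" and Y: "padic_null p Y"
  shows "padic_null p (\<lambda>n. X n + Y n)"
  unfolding padic_null_def
proof (intro allI impI)
  fix e :: real assume "e > 0"
  with X Y obtain N1 N2 where N1: "\<forall>n\<ge>N1. padic_norm_rat p (X n) < e"
    and N2: "\<forall>n\<ge>N2. padic_norm_rat p (Y n) < e"
    unfolding padic_null_def by meson
  have "padic_norm_rat p (X n + Y n) < e" if "n \<ge> max N1 N2" for n
    using padic_norm_rat_add_le_max[of "X n" "Y n"] N1 N2 that by (simp add: le_less_trans)
  then show "\<exists>N. \<forall>n\<ge>N. padic_norm_rat p (X n + Y n) < e" by blast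
qed

lemma padic_null_minus: "padic_null p X \<Longrightarrow> padic_null p (\<lambda>n. - X n)"
  unfolding padic_null_def padic_norm_rat_minus .

lemma padic_null_mult:
  assumes X: "padic_null p X" and Y: "padic_null p Y"
  shows "padic_null p (\<lambda>n. X n * Y n)"
  unfolding padic_null_def
proof (intro allI impI)
  fix e :: real assume "e > 0"
  with X Y obtain N1 N2 where N1: "\<forall>n\<ge>N1. padic_norm_rat p (X n) < 1"
    and N2: "\<forall>n\<ge>N2. padic_norm_rat p (Y n) < e"
    unfolding padic_null_def by (meson zero_less_one)
  have "padic_norm_rat p (X n * Y n) < e" if "n \<ge> max N1 N2" for n
  proof -
    have "padic_norm_rat p (X n) * padic_norm_rat p (Y n) \<le> padic_norm_rat p (Y n)"
      using that N1 by (intro mult_left_le_one_le padic_norm_rat_nonneg) auto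
    moreover have "padic_norm_rat p (Y n) < e" using that N2 by simp
    ultimately show ?thesis by (simp add: padic_norm_rat_mult)
  qed
  then show "\<exists>N. \<forall>n\<ge>N. padic_norm_rat p (X n * Y n) < e" by blast
qed

lemma padic_null_cmult:
  assumes X: "padic_null p X"
  shows "padic_null p (\<lambda>n. c * X n)"
proof (cases "c = 0")
  case True
  then show ?thesis by (simp add: padic_null_zero)
next
  case False
  then have c_pos: "padic_norm_rat p c > 0" by (rule padic_norm_rat_pos)
  show ?thesis unfolding padic_null_def
  proof (intro allI impI)
    fix e :: real assume "e > 0"
    with X c_pos obtain N where N: "\<forall>n\<ge>N. padic_norm_rat p (X n) < e / padic_norm_rat p c"
      unfolding padic_null_def by (meson divide_pos_pos)
    have "padic_norm_rat p (c * X n) < e" if "n \<ge> N" for n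
    proof -
      have "padic_norm_rat p c * padic_norm_rat p (X n) < e"
        using N that c_pos by (simp add: pos_less_divide_eq mult.commute)
      then show ?thesis by (simp add: padic_norm_rat_mult)
    qed
    then show "\<exists>N. \<forall>n\<ge>N. padic_norm_rat p (c * X n) < e" by blast
  qed
qed

end

section \<open>Finite Fourier analysis modulo powers of p\<close>

lemma cis_add_2pi_int: "cis (x + 2 * pi * of_int k) = cis x"
  by (simp add: cis_mult[symmetric] cis_multiple_2pi)

lemma cis_2pi_mod_power:
  assumes "p > 0" and "j \<le> m"
  shows "cis (2 * pi * (real (x mod p ^ m) / real p ^ j)) = cis (2 * pi * (real x / real p ^ j))"
proof -
  let ?q = "x div p ^ m"
  have "real x = real (x mod p ^ m + p ^ m * ?q)" by simp
  then have "real (x mod p ^ m) + real p ^ m * real ?q = real x"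
    by (simp only: of_nat_add of_nat_mult of_nat_power)
  moreover have "real p ^ m = real p ^ j * real p ^ (m - j)" using assms(2) by (simp flip: power_add)
  ultimately have "real (x mod p ^ m) = real x - real p ^ j * (real p ^ (m - j) * real ?q)"
    by (simp add: algebra_simps)
  then have "real (x mod p ^ m) / real p ^ j = real x / real p ^ j + of_int (- int (p ^ (m - j) * ?q))"
    using assms(1) by (simp add: diff_divide_distrib)
  then show ?thesis by (simp only: distrib_left cis_add_2pi_int)
qed

lemma sum_lessThan_periodic:
  fixes h :: "nat \<Rightarrow> 'a :: comm_semiring_1"
  assumes per: "\<And>c. h (c + N) = h c"
  shows "(\<Sum>c<k * N. h c) = of_nat k * (\<Sum>c<N. h c)"
proof -
  have per_mult: "h (c + m * N) = h c" for c m
  proof (induction m)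
    case (Suc m)
    then show ?case using per[of "c + m * N"] by (simp add: algebra_simps)
  qed simp
  have "(\<Sum>c<k * N. h c) = (\<Sum>m<k. sum h {m * N..<m * N + N})"
    using sum.nat_group[of h N k] by simp
  also have "\<dots> = (\<Sum>m<k. \<Sum>c<N. h c)"
  proof (rule sum.cong[OF refl])
    fix m
    have "sum h {m * N..<m * N + N} = sum h {0 + m * N..<N + m * N}" by (simp add: add.commute)
    also have "\<dots> = (\<Sum>c\<in>{0..<N}. h (c + m * N))" by (rule sum.shift_bounds_nat_ivl)
    finally show "sum h {m * N..<m * N + N} = (\<Sum>c<N. h c)" by (simp add: per_mult atLeast0LessThan)
  qed
  finally show ?thesis by simp
qed

lemma sum_lessThan_multiples:
  fixes g :: "nat \<Rightarrow> 'a :: comm_monoid_add"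
  assumes "q > 0"
  shows "(\<Sum>a<q * M. if q dvd a then g a else 0) = (\<Sum>b<M. g (q * b))"
proof -
  have "{a \<in> {..<q * M}. q dvd a} = (\<lambda>b. q * b) ` {..<M}"
    using assms by (auto elim: dvdE)
  moreover have "inj_on (\<lambda>b. q * b) {..<M}" using assms by (auto simp: inj_on_def)
  ultimately show ?thesis by (simp add: sum.inter_filter[symmetric] sum.reindex)
qed

lemma inj_on_mult_mod:
  assumes "coprime N (u :: nat)"
  shows "inj_on (\<lambda>c. (u * c) mod N) {..<N}"
proof -
  have key: "c = c'" if le: "c' \<le> c" and lt: "c < N" and eq: "(u * c) mod N = (u * c') mod N"
    for c c'
  proof -
    have "u * c' \<le> u * c" using le by simp
    with eq have "N dvd u * (c - c')"
      using mod_eq_dvd_iff_nat by (simp add: diff_mult_distrib2)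
    then have "N dvd c - c'" using assms by (simp add: coprime_dvd_mult_right_iff)
    moreover have "c - c' < N" using lt by simp
    ultimately have "c - c' = 0" using dvd_imp_le by fastforce
    with le show ?thesis by simp
  qed
  show ?thesis unfolding inj_on_def
  proof (intro ballI impI)
    fix c c' assume "c \<in> {..<N}" "c' \<in> {..<N}" "(u * c) mod N = (u * c') mod N"
    then show "c = c'" using key[of c' c] key[of c c'] by (cases "c' \<le> c") auto
  qed
qed

lemma cis_2pi_fraction_eq_1_iff:
  assumes "m > 0"
  shows "cis (2 * pi * (of_int c / real m)) = 1 \<longleftrightarrow> int m dvd c"
proof
  assume "cis (2 * pi * (of_int c / real m)) = 1"
  then obtain n :: int where "2 * pi * (of_int c / real m) = of_int (2 * n) * pi"
    by (auto simp: cis_conv_exp exp_eq_1)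
  then have "real_of_int c = of_int n * real m" using assms by (simp add: field_simps)
  then have "c = n * int m" by (metis of_int_eq_iff of_int_mult of_int_of_nat_eq)
  then show "int m dvd c" by simp
next
  assume "int m dvd c"
  then obtain z where "c = int m * z" by blast
  then show "cis (2 * pi * (of_int c / real m)) = 1"
    using assms by (simp add: cis_multiple_2pi)
qed

lemma sum_cis_2pi_fraction:
  assumes m: "m > 0"
  shows "(\<Sum>b<k * m. cis (2 * pi * (of_int (int b * c) / real m))) =
         (if int m dvd c then of_nat (k * m) else 0)"
proof -
  let ?w = "cis (2 * pi * (of_int c / real m))"
  have pow: "cis (2 * pi * (of_int (int b * c) / real m)) = ?w ^ b" for b
    unfolding Complex.DeMoivre by (rule arg_cong[where f = cis]) (simp add: field_simps)
  show ?thesis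
  proof (cases "int m dvd c")
    case True
    then have "?w = 1" using cis_2pi_fraction_eq_1_iff[OF m] by blast
    with True show ?thesis by (simp only: pow) simp
  next
    case False
    then have "?w \<noteq> 1" using cis_2pi_fraction_eq_1_iff[OF m] by blast
    moreover have "?w ^ m = 1"
      using m by (simp add: Complex.DeMoivre cis_multiple_2pi)
    ultimately have "(\<Sum>b<k * m. ?w ^ b) = 0"
      by (simp add: geometric_sum power_mult[symmetric] mult.commute[of k m] power_mult)
    with False show ?thesis by (simp only: pow) simp
  qed
qed

text \<open>\<open>dft_kernel p n a c\<close> is \<open>chi_p (- \<xi> x)\<close> at \<open>\<xi> = a/p^n\<close>, \<open>x = c\<close>: the kernel of the inverse
  Fourier transform.\<close>

definition dft_kernel :: "nat \<Rightarrow> nat \<Rightarrow> nat \<Rightarrow> nat \<Rightarrow> complex" where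
  "dft_kernel p n a c = cis (2 * pi * (of_int (- (int a * int c)) / real p ^ n))"

definition pow_dvd_ind :: "nat \<Rightarrow> nat \<Rightarrow> nat \<Rightarrow> complex" where
  "pow_dvd_ind p j c = (if p ^ j dvd c then 1 else 0)"

lemma dft_kernel_add_period: "dft_kernel p n a (c + p ^ n) = dft_kernel p n a c" if "p > 0"
proof -
  have "of_int (- (int a * int (c + p ^ n))) / real p ^ n =
        of_int (- (int a * int c)) / real p ^ n + of_int (- int a)"
    using that by (simp add: field_simps)
  then show ?thesis unfolding dft_kernel_def by (simp only: distrib_left cis_add_2pi_int)
qed

lemma sum_pow_dvd_ind_dft_kernel:
  assumes p: "p > 0" and s: "s \<le> n"
  shows "(\<Sum>a<p ^ (2 * n). pow_dvd_ind p s a * dft_kernel p n a c) =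
         of_nat (p ^ (2 * n - s)) * pow_dvd_ind p (n - s) c"
proof -
  let ?m = "p ^ (n - s)"
  have total: "p ^ (2 * n) = p ^ s * (p ^ n * ?m)" and count: "p ^ (2 * n - s) = p ^ n * ?m"
    using s by (simp_all add: mult_2 flip: power_add)
  have kernel: "dft_kernel p n (p ^ s * b) c = cis (2 * pi * (of_int (int b * - int c) / real ?m))"
    for b
  proof -
    have "real p ^ n = real p ^ s * real ?m" using s by (simp flip: power_add)
    then show ?thesis unfolding dft_kernel_def using p by (simp add: field_simps)
  qed
  have "(\<Sum>a<p ^ (2 * n). pow_dvd_ind p s a * dft_kernel p n a c) =
        (\<Sum>a<p ^ s * (p ^ n * ?m). if p ^ s dvd a then dft_kernel p n a c else 0)"
    unfolding total by (intro sum.cong) (auto simp: pow_dvd_ind_def)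
  also have "\<dots> = (\<Sum>b<p ^ n * ?m. dft_kernel p n (p ^ s * b) c)"
    using p by (intro sum_lessThan_multiples) simp
  also have "\<dots> = (if int ?m dvd - int c then of_nat (p ^ n * ?m) else 0)"
    unfolding kernel using p by (intro sum_cis_2pi_fraction) simp
  also have "\<dots> = of_nat (p ^ (2 * n - s)) * pow_dvd_ind p (n - s) c"
    unfolding count pow_dvd_ind_def by (simp flip: of_nat_power add: of_nat_dvd_iff)
  finally show ?thesis .
qed

text \<open>\<open>radial_samples p C n a\<close> is the value at \<open>a / p^n\<close> of a symbol that vanishes on \<open>Z_p\<close> and
  equals \<open>C j\<close> where \<open>|\<xi>|_p = p^j > 1\<close>; \<open>omega_sum p C n c\<close> is the claimed series at the integer
  \<open>c\<close>, truncated after \<open>n\<close> terms.\<close>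

definition radial_samples :: "nat \<Rightarrow> (nat \<Rightarrow> complex) \<Rightarrow> nat \<Rightarrow> nat \<Rightarrow> complex" where
  "radial_samples p C n a = (if p ^ n dvd a then 0 else C (n - multiplicity p a))"

definition omega_sum :: "nat \<Rightarrow> (nat \<Rightarrow> complex) \<Rightarrow> nat \<Rightarrow> nat \<Rightarrow> complex" where
  "omega_sum p C n c = (\<Sum>j<n. C (Suc j) *
      (of_nat p ^ Suc j * pow_dvd_ind p (Suc j) c - of_nat p ^ j * pow_dvd_ind p j c))"

context padic_prime
begin

lemma radial_samples_telescope:
  "radial_samples p C n a = (\<Sum>j<n. C (Suc j) * (pow_dvd_ind p (n - Suc j) a - pow_dvd_ind p (n - j) a))"
proof (cases "p ^ n dvd a")
  case True
  then have "p ^ k dvd a" if "k \<le> n" for k using that by (meson dvd_trans le_imp_power_dvd)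
  then show ?thesis using True by (simp add: radial_samples_def pow_dvd_ind_def)
next
  case False
  then have a: "a \<noteq> 0" by (metis dvd_0_right)
  let ?v = "multiplicity p a"
  have v: "?v < n" using False power_dvd_iff_le_multiplicity_p[OF a] not_less by blast
  have "(\<Sum>j<n. C (Suc j) * (pow_dvd_ind p (n - Suc j) a - pow_dvd_ind p (n - j) a)) =
        (\<Sum>j<n. if j = n - Suc ?v then C (Suc j) else 0)"
    using v by (intro sum.cong) (auto simp: pow_dvd_ind_def power_dvd_iff_le_multiplicity_p[OF a])
  also have "\<dots> = C (n - ?v)" using v by (simp add: Suc_diff_Suc)
  finally show ?thesis using False by (simp add: radial_samples_def)
qed

lemma sum_radial_samples_dft_kernel:
  "(\<Sum>a<p ^ (2 * n). radial_samples p C n a * dft_kernel p n a c) = of_nat p ^ n * omega_sum p C n c"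
proof -
  let ?S = "\<lambda>s. \<Sum>a<p ^ (2 * n). pow_dvd_ind p s a * dft_kernel p n a c"
  have "(\<Sum>a<p ^ (2 * n). radial_samples p C n a * dft_kernel p n a c) =
        (\<Sum>j<n. C (Suc j) * (?S (n - Suc j) - ?S (n - j)))"
    unfolding radial_samples_telescope sum_distrib_right
    by (subst sum.swap) (simp add: sum_distrib_left sum_subtractf algebra_simps)
  also have "\<dots> = (\<Sum>j<n. C (Suc j) *
      (of_nat (p ^ (n + Suc j)) * pow_dvd_ind p (Suc j) c - of_nat (p ^ (n + j)) * pow_dvd_ind p j c))"
  proof (rule sum.cong[OF refl])
    fix j assume "j \<in> {..<n}"
    then have "2 * n - (n - Suc j) = n + Suc j" "n - (n - Suc j) = Suc j"
              "2 * n - (n - j) = n + j" "n - (n - j) = j" by auto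
    then show "C (Suc j) * (?S (n - Suc j) - ?S (n - j)) = C (Suc j) *
      (of_nat (p ^ (n + Suc j)) * pow_dvd_ind p (Suc j) c - of_nat (p ^ (n + j)) * pow_dvd_ind p j c)"
      using sum_pow_dvd_ind_dft_kernel[OF p_pos, of "n - Suc j" n c]
            sum_pow_dvd_ind_dft_kernel[OF p_pos, of "n - j" n c] by simp
  qed
  also have "\<dots> = of_nat p ^ n * omega_sum p C n c"
    unfolding omega_sum_def sum_distrib_left by (intro sum.cong) (simp_all add: power_add algebra_simps)
  finally show ?thesis .
qed

lemma sum_radial_samples_dft:
  "(\<Sum>a<p ^ (2 * n). radial_samples p C n a *
       ((\<Sum>c<p ^ n. dft_kernel p n a c * f c) / of_nat p ^ n) / of_nat p ^ n) =
   (\<Sum>c<p ^ n. omega_sum p C n c * f c / of_nat p ^ n)"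
proof -
  have "(\<Sum>a<p ^ (2 * n). radial_samples p C n a *
          ((\<Sum>c<p ^ n. dft_kernel p n a c * f c) / of_nat p ^ n) / of_nat p ^ n) =
        (\<Sum>a<p ^ (2 * n). \<Sum>c<p ^ n. radial_samples p C n a * dft_kernel p n a c * f c /
           (of_nat p ^ n * of_nat p ^ n))"
    by (simp add: sum_distrib_left sum_divide_distrib algebra_simps)
  also have "\<dots> = (\<Sum>c<p ^ n. (\<Sum>a<p ^ (2 * n). radial_samples p C n a * dft_kernel p n a c) *
      f c / (of_nat p ^ n * of_nat p ^ n))"
    by (subst sum.swap) (simp add: sum_distrib_right sum_divide_distrib)
  also have "\<dots> = (\<Sum>c<p ^ n. omega_sum p C n c * f c / of_nat p ^ n)"
    unfolding sum_radial_samples_dft_kernel using p_pos by (simp add: field_simps)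
  finally show ?thesis .
qed

lemma multiplicity_eq_of_add_high_power:
  assumes x: "x \<noteq> 0" and v: "multiplicity p x < m" and eq: "y + p ^ m * t = x"
  shows "y \<noteq> 0 \<and> multiplicity p y = multiplicity p x"
proof -
  let ?v = "multiplicity p x"
  have dvd_x: "p ^ k dvd x \<longleftrightarrow> k \<le> ?v" for k by (rule power_dvd_iff_le_multiplicity_p[OF x])
  have dvd_rest: "p ^ k dvd p ^ m * t" if "k \<le> m" for k using that by (simp add: le_imp_power_dvd)
  have "y \<noteq> 0"
  proof
    assume "y = 0"
    with eq have "p ^ m dvd x" by auto
    with dvd_x v show False by simp
  qed
  moreover have "p ^ ?v dvd y"
  proof -
    have "p ^ ?v dvd y + p ^ m * t" using eq dvd_x by simp
    then show ?thesis using dvd_rest[of ?v] v by (simp add: dvd_add_left_iff)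
  qed
  moreover have "\<not> p ^ Suc ?v dvd y"
  proof
    assume "p ^ Suc ?v dvd y"
    then have "p ^ Suc ?v dvd y + p ^ m * t" using dvd_rest[of "Suc ?v"] v by simp
    then have "p ^ Suc ?v dvd x" by (simp only: eq)
    then show False using dvd_x[of "Suc ?v"] by (simp del: power_Suc)
  qed
  ultimately show ?thesis by (simp add: multiplicity_eqI)
qed

lemma multiplicity_mult_unit_mod:
  assumes u: "\<not> p dvd u" and c: "c \<noteq> 0" "c < p ^ m"
  shows "(u * c) mod p ^ m \<noteq> 0 \<and> multiplicity p ((u * c) mod p ^ m) = multiplicity p c"
proof -
  have "multiplicity p u = 0" using u by (simp add: not_dvd_imp_multiplicity_0)
  then have uc: "u * c \<noteq> 0" "multiplicity p (u * c) = multiplicity p c"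
    using prime_elem_multiplicity_mult_distrib[of p u c] prime_p u c by (auto intro: Nat.gr0I)
  have "\<not> p ^ m dvd c" using c by (auto dest: dvd_imp_le)
  then have "multiplicity p (u * c) < m"
    using uc power_dvd_iff_le_multiplicity_p[OF c(1), of m] by simp
  from multiplicity_eq_of_add_high_power[OF uc(1) this mod_mult_div_eq] show ?thesis
    using uc(2) by simp
qed

text \<open>Multiplication by a unit \<open>u\<close> permutes \<open>Z/p^m\<close> and preserves valuations, so a function of
  the valuation cannot tell the characters \<open>c \<mapsto> cis (2\<pi> c/p^j)\<close> and \<open>c \<mapsto> cis (2\<pi> uc/p^j)\<close> apart.\<close>

lemma sum_cis_mult_unit:
  fixes g :: "nat \<Rightarrow> complex"
  assumes u: "\<not> p dvd u" and jm: "j \<le> m"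
    and g: "\<And>c c'. c \<noteq> 0 \<Longrightarrow> c' \<noteq> 0 \<Longrightarrow> multiplicity p c = multiplicity p c' \<Longrightarrow> g c = g c'"
  shows "(\<Sum>c<p ^ m. cis (2 * pi * (real (u * c) / real p ^ j)) * g c) =
         (\<Sum>c<p ^ m. cis (2 * pi * (real c / real p ^ j)) * g c)"
proof -
  define \<sigma> where "\<sigma> c = (u * c) mod p ^ m" for c
  have "coprime (p ^ m) u" using prime_imp_coprime[OF prime_p u] by simp
  then have inj: "inj_on \<sigma> {..<p ^ m}" unfolding \<sigma>_def by (rule inj_on_mult_mod)
  have "\<sigma> c < p ^ m" for c unfolding \<sigma>_def using p_pos by simp
  with inj have perm: "\<sigma> ` {..<p ^ m} = {..<p ^ m}" by (intro endo_inj_surj) auto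
  have "cis (2 * pi * (real (\<sigma> c) / real p ^ j)) * g (\<sigma> c) =
        cis (2 * pi * (real (u * c) / real p ^ j)) * g c" if "c < p ^ m" for c
  proof (cases "c = 0")
    case False
    then show ?thesis
      using multiplicity_mult_unit_mod[OF u False that] g[of "\<sigma> c" c] cis_2pi_mod_power[OF p_pos jm]
      by (simp add: \<sigma>_def)
  qed (simp add: \<sigma>_def)
  then have "(\<Sum>c<p ^ m. cis (2 * pi * (real (\<sigma> c) / real p ^ j)) * g (\<sigma> c)) =
             (\<Sum>c<p ^ m. cis (2 * pi * (real (u * c) / real p ^ j)) * g c)"
    by (intro sum.cong) auto
  then show ?thesis
    using sum.reindex[OF inj, of "\<lambda>c. cis (2 * pi * (real c / real p ^ j)) * g c"] perm by simp
qed

end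

section \<open>Sampling Q_p at the points a/p^n\<close>

lemma Rep_qp_of_rat: "Rep_qp (qp_of_rat r :: 'p::finite qp) = qp_cls CARD('p) (\<lambda>n. r)"
  unfolding qp_of_rat_def qp_mk_def
  by (rule Abs_qp_inverse, rule CollectI, rule exI[of _ "\<lambda>n. r"]) (simp add: padic_cauchy_def)

lemma qp_rep_in_Rep_qp: "qp_rep x \<in> Rep_qp (x :: 'p::finite qp)"
proof -
  obtain X where "padic_cauchy CARD('p) X" "Rep_qp x = qp_cls CARD('p) X"
    using Rep_qp[of x] by blast
  then have "X \<in> Rep_qp x" unfolding qp_cls_def using padic_null_zero by simp
  then show ?thesis unfolding qp_rep_def by (rule someI[of "\<lambda>X. X \<in> Rep_qp x"])
qed

lemma padic_null_qp_rep_of_rat: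
  "padic_null CARD('p) (\<lambda>n. r - qp_rep (qp_of_rat r :: 'p::finite qp) n)"
  using qp_rep_in_Rep_qp[of "qp_of_rat r :: 'p qp"] unfolding Rep_qp_of_rat qp_cls_def by simp

definition riemann_sum :: "('p::finite qp \<Rightarrow> complex) \<Rightarrow> nat \<Rightarrow> complex" where
  "riemann_sum f n = (\<Sum>a<CARD('p) ^ (2 * n).
      f (qp_of_rat (of_nat a / of_nat CARD('p) ^ n)) / of_nat CARD('p) ^ n)"

lemma qp_int_eq_lim_riemann_sum: "qp_int f = lim (riemann_sum f)"
  unfolding qp_int_def riemann_sum_def ..

lemma qp_int_cong_samples:
  fixes f g :: "'p::finite qp \<Rightarrow> complex"
  assumes "\<And>n a. f (qp_of_rat (of_nat a / of_nat CARD('p) ^ n)) =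
                  g (qp_of_rat (of_nat a / of_nat CARD('p) ^ n))"
  shows "qp_int f = qp_int g"
  unfolding qp_int_def using assms by simp

lemma qp_int_eventually_cong:
  assumes "\<forall>\<^sub>F n in sequentially. riemann_sum f n = riemann_sum g n"
  shows "qp_int f = qp_int g"
  unfolding qp_int_eq_lim_riemann_sum lim_def using tendsto_cong[OF assms] by simp

lemma qp_int_eventually_const:
  assumes "\<forall>\<^sub>F n in sequentially. riemann_sum f n = c"
  shows "qp_int f = c"
  unfolding qp_int_eq_lim_riemann_sum by (rule limI[OF tendsto_eventually[OF assms]])

abbreviation Zp_radial :: "(real \<Rightarrow> real) \<Rightarrow> 'p::finite qp \<Rightarrow> complex" where
  "Zp_radial J \<equiv> (\<lambda>x. if qp_norm x \<le> 1 then complex_of_real (J (qp_norm x)) else 0)"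

definition Z0_coeff :: "(real \<Rightarrow> real) \<Rightarrow> real \<Rightarrow> 'p::finite itself \<Rightarrow> nat \<Rightarrow> complex" where
  "Z0_coeff J t P j = exp (- (complex_of_real t * (1 - Jhat_at J P j))) * (Jhat_at J P j - 1)"

definition Z0_symbol :: "(real \<Rightarrow> real) \<Rightarrow> real \<Rightarrow> 'p::finite qp \<Rightarrow> complex" where
  "Z0_symbol J t \<xi> = (Jhat J \<xi> - 1) * exp (- (complex_of_real t * (1 - Jhat J \<xi>)))"

definition Z0_series :: "(real \<Rightarrow> real) \<Rightarrow> real \<Rightarrow> 'p::finite qp \<Rightarrow> complex" where
  "Z0_series J t x = (\<Sum>j. Z0_coeff J t TYPE('p) (Suc j) *
      (of_nat CARD('p) ^ Suc j * Omega (real CARD('p) ^ Suc j * qp_norm x)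
       - of_nat CARD('p) ^ j * Omega (real CARD('p) ^ j * qp_norm x)))"

definition sample_regular :: "nat \<Rightarrow> ('p::finite qp \<Rightarrow> complex) \<Rightarrow> bool" where
  "sample_regular L \<phi> \<longleftrightarrow>
     (\<forall>c c'. int CARD('p) ^ L dvd int c - int c' \<longrightarrow>
        \<phi> (qp_of_rat (of_nat c)) = \<phi> (qp_of_rat (of_nat c'))) \<and>
     (\<forall>c. CARD('p) ^ L dvd c \<longrightarrow> \<phi> (qp_of_rat (of_nat c)) = 0) \<and>
     (\<forall>a n. \<not> CARD('p) ^ n dvd a \<longrightarrow> \<phi> (qp_of_rat (of_nat a / of_nat CARD('p) ^ n)) = 0)"

lemma sample_regularD:
  fixes \<phi> :: "'p::finite qp \<Rightarrow> complex"
  assumes "sample_regular L \<phi>"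
  shows sample_regular_periodic: "int CARD('p) ^ L dvd int c - int c' \<Longrightarrow>
          \<phi> (qp_of_rat (of_nat c)) = \<phi> (qp_of_rat (of_nat c'))"
    and sample_regular_zero: "CARD('p) ^ L dvd c \<Longrightarrow> \<phi> (qp_of_rat (of_nat c)) = 0"
    and sample_regular_Zp: "\<not> CARD('p) ^ n dvd a \<Longrightarrow>
          \<phi> (qp_of_rat (of_nat a / of_nat CARD('p) ^ n)) = 0"
  using assms unfolding sample_regular_def by blast+

context
  assumes prime_card: "prime CARD('p::finite)"
begin

interpretation padic_prime "CARD('p)"
  using prime_card by unfold_locales

lemma qp_mk_eq_qp_of_rat:
  assumes N: "padic_null CARD('p) (\<lambda>n. X n - r)"
  shows "(qp_mk X :: 'p qp) = qp_of_rat r"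
proof -
  have "padic_null CARD('p) (\<lambda>n. X n - Z n) \<longleftrightarrow> padic_null CARD('p) (\<lambda>n. r - Z n)" for Z
  proof
    assume "padic_null CARD('p) (\<lambda>n. X n - Z n)"
    with N have "padic_null CARD('p) (\<lambda>n. - (X n - r) + (X n - Z n))"
      by (intro padic_null_add padic_null_minus)
    then show "padic_null CARD('p) (\<lambda>n. r - Z n)" by (rule padic_null_cong) simp
  next
    assume "padic_null CARD('p) (\<lambda>n. r - Z n)"
    with N have "padic_null CARD('p) (\<lambda>n. (X n - r) + (r - Z n))" by (intro padic_null_add)
    then show "padic_null CARD('p) (\<lambda>n. X n - Z n)" by (rule padic_null_cong) simp
  qed
  then have "qp_cls CARD('p) X = qp_cls CARD('p) (\<lambda>n. r)" unfolding qp_cls_def by simp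
  then show ?thesis unfolding qp_of_rat_def qp_mk_def by simp
qed

lemma qp_of_rat_diff: "(qp_of_rat (r - s) :: 'p qp) = qp_of_rat r - qp_of_rat s"
proof -
  let ?X = "qp_rep (qp_of_rat r :: 'p qp)" and ?Y = "qp_rep (qp_of_rat s :: 'p qp)"
  have "padic_null CARD('p) (\<lambda>n. - (r - ?X n) + (s - ?Y n))"
    by (intro padic_null_add padic_null_minus padic_null_qp_rep_of_rat)
  then have "padic_null CARD('p) (\<lambda>n. (?X n - ?Y n) - (r - s))" by (rule padic_null_cong) simp
  then show ?thesis unfolding minus_qp_def by (rule qp_mk_eq_qp_of_rat[symmetric])
qed

lemma qp_of_rat_minus: "(qp_of_rat (- r) :: 'p qp) = - qp_of_rat r"
proof -
  let ?X = "qp_rep (qp_of_rat r :: 'p qp)"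
  have "padic_null CARD('p) (\<lambda>n. - ?X n - (- r))"
    by (rule padic_null_cong[OF padic_null_qp_rep_of_rat]) simp
  then show ?thesis unfolding uminus_qp_def by (rule qp_mk_eq_qp_of_rat[symmetric])
qed

lemma qp_of_rat_mult: "(qp_of_rat (r * s) :: 'p qp) = qp_of_rat r * qp_of_rat s"
proof -
  let ?X = "qp_rep (qp_of_rat r :: 'p qp)" and ?Y = "qp_rep (qp_of_rat s :: 'p qp)"
  have "padic_null CARD('p)
          (\<lambda>n. ((- r) * (s - ?Y n) + (- s) * (r - ?X n)) + (r - ?X n) * (s - ?Y n))"
    by (intro padic_null_add padic_null_cmult padic_null_mult padic_null_qp_rep_of_rat)
  then have "padic_null CARD('p) (\<lambda>n. (?X n * ?Y n) - (r * s))"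
    by (rule padic_null_cong) (simp add: algebra_simps)
  then show ?thesis unfolding times_qp_def by (rule qp_mk_eq_qp_of_rat[symmetric])
qed

lemma qp_norm_of_rat: "qp_norm (qp_of_rat r :: 'p qp) = padic_norm_rat CARD('p) r"
proof -
  let ?X = "qp_rep (qp_of_rat r :: 'p qp)"
  have "(\<lambda>n. padic_norm_rat CARD('p) (?X n)) \<longlonglongrightarrow> padic_norm_rat CARD('p) r"
  proof (rule LIMSEQ_I)
    fix e :: real assume "e > 0"
    then obtain N where N: "\<forall>n\<ge>N. padic_norm_rat CARD('p) (r - ?X n) < e"
      using padic_null_qp_rep_of_rat unfolding padic_null_def by blast
    have "norm (padic_norm_rat CARD('p) (?X n) - padic_norm_rat CARD('p) r) < e" if "n \<ge> N" for n
      using padic_norm_rat_diff_abs_le[of "?X n" r] padic_norm_rat_commute[of "?X n" r]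
        N[rule_format, OF that] by simp
    then show "\<exists>N. \<forall>n\<ge>N. norm (padic_norm_rat CARD('p) (?X n) - padic_norm_rat CARD('p) r) < e"
      by blast
  qed
  then show ?thesis unfolding qp_norm_def by (rule limI)
qed

lemma qp_frac_of_rat:
  assumes f: "frac_rat_spec CARD('p) r f"
  shows "qp_frac (qp_of_rat r :: 'p qp) = f"
proof -
  let ?X = "qp_rep (qp_of_rat r :: 'p qp)"
  obtain N where N: "\<forall>n\<ge>N. padic_norm_rat CARD('p) (r - ?X n) < 1"
    using padic_null_qp_rep_of_rat unfolding padic_null_def by (meson zero_less_one)
  have "frac_rat CARD('p) (?X n) = f" if "n \<ge> N" for n
    using frac_rat_spec_near[OF f, of "?X n"] padic_norm_rat_commute[of "?X n" r]
      N[rule_format, OF that] by (simp add: frac_rat_eqI)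
  then have ev: "\<forall>\<^sub>F n in sequentially. frac_rat CARD('p) (?X n) = f"
    by (rule eventually_sequentiallyI)
  have "(THE f. \<forall>\<^sub>F n in sequentially. frac_rat CARD('p) (?X n) = f) = f"
  proof (rule the_equality)
    fix f' assume "\<forall>\<^sub>F n in sequentially. frac_rat CARD('p) (?X n) = f'"
    with ev have "\<forall>\<^sub>F n in sequentially. f' = f" by eventually_elim simp
    then show "f' = f" by simp
  qed (fact ev)
  then show ?thesis unfolding qp_frac_def .
qed

lemma chi_p_of_rat_fraction:
  "chi_p (qp_of_rat (of_int c / of_nat CARD('p) ^ M) :: 'p qp) =
   cis (2 * pi * (of_int c / real CARD('p) ^ M))"
proof -
  let ?m = "int CARD('p) ^ M"
  have "real_of_int (c mod ?m) = of_int (c - ?m * (c div ?m))"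
    by (simp only: minus_mult_div_eq_mod)
  then have "real_of_rat (of_int (c mod ?m) / of_nat CARD('p) ^ M) =
             of_int c / real CARD('p) ^ M + of_int (- (c div ?m))"
    using p_pos by (simp add: of_rat_divide of_rat_power field_simps)
  then show ?thesis
    unfolding chi_p_def qp_frac_of_rat[OF frac_rat_spec_fraction]
    by (simp only: distrib_left cis_add_2pi_int)
qed

lemma riemann_sum_Zp:
  assumes "\<And>a. \<not> CARD('p) ^ n dvd a \<Longrightarrow> f (qp_of_rat (of_nat a / of_nat CARD('p) ^ n) :: 'p qp) = 0"
  shows "riemann_sum f n = (\<Sum>c<CARD('p) ^ n. f (qp_of_rat (of_nat c))) / of_nat CARD('p) ^ n"
proof -
  let ?P = "CARD('p)"
  have "riemann_sum f n = (\<Sum>a<?P ^ n * ?P ^ n. if ?P ^ n dvd a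
          then f (qp_of_rat (of_nat a / of_nat ?P ^ n)) / of_nat ?P ^ n else 0)"
    unfolding riemann_sum_def mult_2 power_add using assms by (intro sum.cong) auto
  also have "\<dots> = (\<Sum>c<?P ^ n. f (qp_of_rat (of_nat (?P ^ n * c) / of_nat ?P ^ n)) / of_nat ?P ^ n)"
    using p_pos by (intro sum_lessThan_multiples) simp
  finally show ?thesis using p_pos by (simp add: sum_divide_distrib)
qed

lemma qp_norm_sample_le_1_iff:
  "qp_norm (qp_of_rat (of_nat a / of_nat CARD('p) ^ n) :: 'p qp) \<le> 1 \<longleftrightarrow> CARD('p) ^ n dvd a"
  by (simp add: qp_norm_of_rat padic_norm_rat_of_nat_fraction_le_1_iff)

lemma qp_norm_of_nat_le_1: "qp_norm (qp_of_rat (of_nat c) :: 'p qp) \<le> 1"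
  using qp_norm_sample_le_1_iff[of c 0] by simp

lemma qp_norm_of_nat:
  "c \<noteq> 0 \<Longrightarrow> qp_norm (qp_of_rat (of_nat c) :: 'p qp) = real CARD('p) powr (- real (multiplicity CARD('p) c))"
  using padic_norm_rat_of_int[of "int c"] by (simp add: qp_norm_of_rat multiplicity_of_nat)

lemma Omega_of_nat:
  assumes c: "c \<noteq> 0"
  shows "Omega (real CARD('p) ^ j * qp_norm (qp_of_rat (of_nat c) :: 'p qp)) = pow_dvd_ind CARD('p) j c"
proof -
  let ?v = "multiplicity CARD('p) c"
  have "real CARD('p) ^ j * qp_norm (qp_of_rat (of_nat c) :: 'p qp) = real CARD('p) powr (real j - real ?v)"
    unfolding qp_norm_of_nat[OF c] using p_gt_1 by (simp add: powr_diff powr_realpow powr_minus divide_inverse)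
  moreover have "real CARD('p) powr (real j - real ?v) \<le> 1 \<longleftrightarrow> j \<le> ?v"
    using powr_le_cancel_iff[OF p_gt_1, of "real j - real ?v" 0] p_pos by simp
  ultimately show ?thesis
    unfolding Omega_def pow_dvd_ind_def power_dvd_iff_le_multiplicity_p[OF c] using p_pos by simp
qed

lemma chi_p_sample_mult:
  "chi_p (qp_of_rat (of_nat a / of_nat CARD('p) ^ n) * qp_of_rat (of_nat c) :: 'p qp) =
   cis (2 * pi * (real (a * c) / real CARD('p) ^ n))"
  using chi_p_of_rat_fraction[of "int (a * c)" n] by (simp add: qp_of_rat_mult[symmetric])

lemma chi_p_minus_sample_mult:
  "chi_p (- (qp_of_rat (of_nat a / of_nat CARD('p) ^ n) * qp_of_rat (of_nat c)) :: 'p qp) =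
   dft_kernel CARD('p) n a c"
  using chi_p_of_rat_fraction[of "- (int a * int c)" n]
  by (simp add: dft_kernel_def qp_of_rat_mult[symmetric] qp_of_rat_minus[symmetric])

lemma qp_norm_of_nat_diff_le:
  assumes "int CARD('p) ^ L dvd int c - int c'"
  shows "qp_norm (qp_of_rat (of_nat c) - qp_of_rat (of_nat c') :: 'p qp) \<le> real CARD('p) powr (- real L)"
proof -
  have "padic_norm_rat CARD('p) (of_int (int c - int c')) \<le> real CARD('p) powr (- real L)"
  proof (cases "int c - int c' = 0")
    case False
    with assms have "L \<le> multiplicity (int CARD('p)) (int c - int c')"
      using int_p_not_unit power_dvd_iff_le_multiplicity by blast
    then show ?thesis using padic_norm_rat_of_int[OF False] p_gt_1 by (simp add: powr_mono)
  qed simp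
  then show ?thesis by (simp add: qp_of_rat_diff[symmetric] qp_norm_of_rat)
qed

lemma qp_test_sample_regular:
  fixes \<phi> :: "'p qp \<Rightarrow> complex"
  assumes "qp_test \<phi>" and supp: "\<forall>x. \<phi> x \<noteq> 0 \<longrightarrow> 0 < qp_norm x \<and> qp_norm x \<le> 1"
  obtains L where "sample_regular L \<phi>"
proof -
  let ?P = "CARD('p)"
  obtain l :: int where loc: "\<forall>x y. qp_norm (x - y) \<le> real ?P powr (- real_of_int l) \<longrightarrow> \<phi> x = \<phi> y"
    using assms(1) unfolding qp_test_def by blast
  define L where "L = nat l"
  have per: "\<phi> (qp_of_rat (of_nat c)) = \<phi> (qp_of_rat (of_nat c'))"
    if "int ?P ^ L dvd int c - int c'" for c c'
  proof -
    have "real ?P powr (- real L) \<le> real ?P powr (- real_of_int l)"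
      using p_gt_1 unfolding L_def by (intro powr_mono) auto
    with qp_norm_of_nat_diff_le[OF that]
    have "qp_norm (qp_of_rat (of_nat c) - qp_of_rat (of_nat c') :: 'p qp) \<le> real ?P powr (- real_of_int l)"
      by linarith
    with loc show ?thesis by blast
  qed
  have zero: "\<phi> (qp_of_rat (of_nat c)) = 0" if "?P ^ L dvd c" for c
  proof -
    have "\<phi> (qp_of_rat 0) = 0"
    proof (rule ccontr)
      assume "\<phi> (qp_of_rat 0) \<noteq> 0"
      then have "0 < qp_norm (qp_of_rat 0 :: 'p qp)" using supp by blast
      then show False by (simp add: qp_norm_of_rat)
    qed
    with that show ?thesis using per[of c 0] by (simp flip: of_nat_power add: of_nat_dvd_iff)
  qed
  have Zp: "\<phi> (qp_of_rat (of_nat a / of_nat ?P ^ n)) = 0" if "\<not> ?P ^ n dvd a" for a n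
  proof (rule ccontr)
    assume "\<phi> (qp_of_rat (of_nat a / of_nat ?P ^ n)) \<noteq> 0"
    then have "qp_norm (qp_of_rat (of_nat a / of_nat ?P ^ n) :: 'p qp) \<le> 1" using supp by blast
    with that show False by (simp add: qp_norm_sample_le_1_iff)
  qed
  have "sample_regular L \<phi>" unfolding sample_regular_def
  proof (intro conjI allI impI)
    show "\<phi> (qp_of_rat (of_nat c)) = \<phi> (qp_of_rat (of_nat c'))" if "int ?P ^ L dvd int c - int c'" for c c'
      using that by (rule per)
    show "\<phi> (qp_of_rat (of_nat c)) = 0" if "?P ^ L dvd c" for c using that by (rule zero)
    show "\<phi> (qp_of_rat (of_nat a / of_nat ?P ^ n)) = 0" if "\<not> ?P ^ n dvd a" for a n
      using that by (rule Zp)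
  qed
  then show thesis by (rule that)
qed

lemma Jhat_eq_1_on_Zp:
  assumes J: "qp_int (Zp_radial J :: 'p qp \<Rightarrow> complex) = 1" and "CARD('p) ^ n dvd a"
  shows "Jhat J (qp_of_rat (of_nat a / of_nat CARD('p) ^ n) :: 'p qp) = 1"
proof -
  let ?P = "CARD('p)" and ?\<xi> = "qp_of_rat (of_nat a / of_nat CARD('p) ^ n) :: 'p qp"
  obtain a' where a': "a = ?P ^ n * a'" using assms(2) by blast
  have "chi_p (?\<xi> * qp_of_rat (of_nat b / of_nat ?P ^ m)) *
          Zp_radial J (qp_of_rat (of_nat b / of_nat ?P ^ m) :: 'p qp) =
        Zp_radial J (qp_of_rat (of_nat b / of_nat ?P ^ m) :: 'p qp)" for b m
  proof (cases "?P ^ m dvd b")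
    case True
    then obtain b' where "b = ?P ^ m * b'" by blast
    then have "?\<xi> * qp_of_rat (of_nat b / of_nat ?P ^ m) = qp_of_rat (of_int (int (a' * b')) / of_nat ?P ^ 0)"
      unfolding a' qp_of_rat_mult[symmetric] using p_pos by simp
    then have "chi_p (?\<xi> * qp_of_rat (of_nat b / of_nat ?P ^ m)) = 1"
      using chi_p_of_rat_fraction[of "int (a' * b')" 0] by simp
    then show ?thesis by simp
  qed (simp add: qp_norm_sample_le_1_iff)
  then have "qp_int (\<lambda>x. chi_p (?\<xi> * x) * Zp_radial J x) = qp_int (Zp_radial J :: 'p qp \<Rightarrow> complex)"
    by (rule qp_int_cong_samples)
  then show ?thesis unfolding Jhat_def qp_ft_def using J by simp
qed

lemma Jhat_sample:
  assumes nd: "\<not> CARD('p) ^ n dvd a"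
  shows "Jhat J (qp_of_rat (of_nat a / of_nat CARD('p) ^ n) :: 'p qp) =
         Jhat_at J TYPE('p) (n - multiplicity CARD('p) a)"
proof -
  let ?P = "CARD('p)"
  let ?\<xi> = "qp_of_rat (of_nat a / of_nat ?P ^ n) :: 'p qp"
  have a0: "a \<noteq> 0" using nd by (metis dvd_0_right)
  define k where "k = multiplicity ?P a"
  define j where "j = n - k"
  let ?\<eta> = "qp_of_rat (1 / of_nat ?P ^ j) :: 'p qp"
  have n: "n = k + j" using nd power_dvd_iff_le_multiplicity_p[OF a0, of n] unfolding j_def k_def by simp
  obtain u where a: "a = ?P ^ k * u" and u: "\<not> ?P dvd u"
    unfolding k_def by (rule multiplicity_decompose'[OF a0 p_not_unit])
  define g where "g c = complex_of_real (J (qp_norm (qp_of_rat (of_nat c) :: 'p qp)))" for c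
  have g: "g c = g c'" if "c \<noteq> 0" "c' \<noteq> 0" "multiplicity ?P c = multiplicity ?P c'" for c c'
    using that by (simp add: g_def qp_norm_of_nat)
  have rs: "riemann_sum (\<lambda>x :: 'p qp. chi_p (qp_of_rat (of_nat b / of_nat ?P ^ i) * x) * Zp_radial J x) m =
            (\<Sum>c<?P ^ m. cis (2 * pi * (real (b * c) / real ?P ^ i)) * g c) / of_nat ?P ^ m" for b i m
  proof -
    have "riemann_sum (\<lambda>x :: 'p qp. chi_p (qp_of_rat (of_nat b / of_nat ?P ^ i) * x) * Zp_radial J x) m =
          (\<Sum>c<?P ^ m. chi_p (qp_of_rat (of_nat b / of_nat ?P ^ i) * qp_of_rat (of_nat c) :: 'p qp) *
             Zp_radial J (qp_of_rat (of_nat c) :: 'p qp)) / of_nat ?P ^ m"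
      by (subst riemann_sum_Zp) (simp_all add: qp_norm_sample_le_1_iff)
    then show ?thesis by (simp add: qp_norm_of_nat_le_1 chi_p_sample_mult g_def)
  qed
  have "real (a * c) / real ?P ^ n = real (u * c) / real ?P ^ j" for c
    unfolding a n using p_pos by (simp add: power_add field_simps)
  then have "riemann_sum (\<lambda>x. chi_p (?\<xi> * x) * Zp_radial J x) m =
             riemann_sum (\<lambda>x. chi_p (?\<eta> * x) * Zp_radial J x) m" if "j \<le> m" for m
    using rs[of a n m] rs[of 1 j m] sum_cis_mult_unit[OF u that g] by simp
  then have "Jhat J ?\<xi> = Jhat J ?\<eta>"
    unfolding Jhat_def qp_ft_def by (intro qp_int_eventually_cong eventually_sequentiallyI)
  then show ?thesis by (simp add: Jhat_at_def j_def k_def)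
qed

lemma qp_ift_sample:
  fixes \<phi> :: "'p qp \<Rightarrow> complex"
  assumes \<phi>: "sample_regular L \<phi>" and "L \<le> n"
  shows "qp_ift \<phi> (qp_of_rat (of_nat a / of_nat CARD('p) ^ n)) =
         (\<Sum>c<CARD('p) ^ n. dft_kernel CARD('p) n a c * \<phi> (qp_of_rat (of_nat c))) / of_nat CARD('p) ^ n"
proof -
  let ?P = "CARD('p)"
  let ?H = "\<lambda>c. dft_kernel ?P n a c * \<phi> (qp_of_rat (of_nat c))"
  have H_period: "?H (c + ?P ^ n) = ?H c" for c
  proof -
    have "\<phi> (qp_of_rat (of_nat (c + ?P ^ n))) = \<phi> (qp_of_rat (of_nat c))"
      using \<open>L \<le> n\<close> by (intro sample_regular_periodic[OF \<phi>]) (simp add: le_imp_power_dvd)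
    then show ?thesis by (simp only: dft_kernel_add_period[OF p_pos])
  qed
  have "riemann_sum (\<lambda>x. chi_p (- (qp_of_rat (of_nat a / of_nat ?P ^ n) * x)) * \<phi> x) m =
        (\<Sum>c<?P ^ n. ?H c) / of_nat ?P ^ n" if "n \<le> m" for m
  proof -
    have m: "?P ^ m = ?P ^ (m - n) * ?P ^ n" using that by (simp flip: power_add)
    have "riemann_sum (\<lambda>x. chi_p (- (qp_of_rat (of_nat a / of_nat ?P ^ n) * x)) * \<phi> x) m =
          (\<Sum>c<?P ^ (m - n) * ?P ^ n. ?H c) / of_nat (?P ^ (m - n) * ?P ^ n)"
      unfolding m
      by (subst riemann_sum_Zp) (simp_all add: sample_regular_Zp[OF \<phi>] chi_p_minus_sample_mult flip: m)
    also have "\<dots> = (\<Sum>c<?P ^ n. ?H c) / of_nat ?P ^ n"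
      using sum_lessThan_periodic[of ?H, OF H_period] p_pos by simp
    finally show ?thesis .
  qed
  then show ?thesis
    unfolding qp_ift_def by (intro qp_int_eventually_const eventually_sequentiallyI)
qed

lemma Z0_symbol_sample:
  assumes "qp_int (Zp_radial J :: 'p qp \<Rightarrow> complex) = 1"
  shows "Z0_symbol J t (qp_of_rat (of_nat a / of_nat CARD('p) ^ n) :: 'p qp) =
         radial_samples CARD('p) (Z0_coeff J t TYPE('p)) n a"
  by (cases "CARD('p) ^ n dvd a")
     (simp_all add: Z0_symbol_def radial_samples_def Z0_coeff_def Jhat_eq_1_on_Zp[OF assms]
                    Jhat_sample mult.commute)

lemma Z0_series_of_nat:
  assumes c: "c \<noteq> 0" and v: "multiplicity CARD('p) c < n"
  shows "Z0_series J t (qp_of_rat (of_nat c) :: 'p qp) = omega_sum CARD('p) (Z0_coeff J t TYPE('p)) n c"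
proof -
  have "pow_dvd_ind CARD('p) j c = 0" if "n \<le> j" for j
    using v that power_dvd_iff_le_multiplicity_p[OF c, of j] by (simp add: pow_dvd_ind_def)
  then show ?thesis
    unfolding Z0_series_def omega_sum_def Omega_of_nat[OF c] by (intro suminf_finite) auto
qed

lemma riemann_sum_Z0_symbol_ift:
  fixes \<phi> :: "'p qp \<Rightarrow> complex"
  assumes J: "qp_int (Zp_radial J :: 'p qp \<Rightarrow> complex) = 1"
    and \<phi>: "sample_regular L \<phi>" and "L \<le> n"
  shows "riemann_sum (\<lambda>\<xi>. Z0_symbol J t \<xi> * qp_ift \<phi> \<xi>) n =
         (\<Sum>c<CARD('p) ^ n. omega_sum CARD('p) (Z0_coeff J t TYPE('p)) n c *
            \<phi> (qp_of_rat (of_nat c)) / of_nat CARD('p) ^ n)"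
proof -
  have "Z0_symbol J t (qp_of_rat (of_nat a / of_nat CARD('p) ^ n) :: 'p qp) *
          qp_ift \<phi> (qp_of_rat (of_nat a / of_nat CARD('p) ^ n)) =
        radial_samples CARD('p) (Z0_coeff J t TYPE('p)) n a *
          ((\<Sum>c<CARD('p) ^ n. dft_kernel CARD('p) n a c * \<phi> (qp_of_rat (of_nat c))) /
            of_nat CARD('p) ^ n)" for a
    by (simp only: Z0_symbol_sample[OF J] qp_ift_sample[OF \<phi> \<open>L \<le> n\<close>])
  then have "riemann_sum (\<lambda>\<xi>. Z0_symbol J t \<xi> * qp_ift \<phi> \<xi>) n =
        (\<Sum>a<CARD('p) ^ (2 * n). radial_samples CARD('p) (Z0_coeff J t TYPE('p)) n a *
          ((\<Sum>c<CARD('p) ^ n. dft_kernel CARD('p) n a c * \<phi> (qp_of_rat (of_nat c))) /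
            of_nat CARD('p) ^ n) / of_nat CARD('p) ^ n)"
    unfolding riemann_sum_def by simp
  also have "\<dots> = (\<Sum>c<CARD('p) ^ n. omega_sum CARD('p) (Z0_coeff J t TYPE('p)) n c *
                      \<phi> (qp_of_rat (of_nat c)) / of_nat CARD('p) ^ n)"
    by (rule sum_radial_samples_dft)
  finally show ?thesis .
qed

lemma riemann_sum_Z0_series:
  fixes \<phi> :: "'p qp \<Rightarrow> complex"
  assumes \<phi>: "sample_regular L \<phi>" and "L \<le> n"
  shows "riemann_sum (\<lambda>x. Z0_series J t x * \<phi> x) n =
         (\<Sum>c<CARD('p) ^ n. omega_sum CARD('p) (Z0_coeff J t TYPE('p)) n c *
            \<phi> (qp_of_rat (of_nat c)) / of_nat CARD('p) ^ n)"
proof -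
  have term_eq: "Z0_series J t (qp_of_rat (of_nat c) :: 'p qp) * \<phi> (qp_of_rat (of_nat c)) =
        omega_sum CARD('p) (Z0_coeff J t TYPE('p)) n c * \<phi> (qp_of_rat (of_nat c))" for c
  proof (cases "\<phi> (qp_of_rat (of_nat c)) = 0")
    case False
    with sample_regular_zero[OF \<phi>] have nd: "\<not> CARD('p) ^ L dvd c" by auto
    then have c: "c \<noteq> 0" by (metis dvd_0_right)
    with nd \<open>L \<le> n\<close> have "multiplicity CARD('p) c < n"
      using power_dvd_iff_le_multiplicity_p[OF c, of L] by simp
    then show ?thesis using Z0_series_of_nat[OF c] by simp
  qed simp
  then show ?thesis by (subst riemann_sum_Zp) (simp_all add: sample_regular_Zp[OF \<phi>] term_eq sum_divide_distrib)
qed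

end

theorem lemma3:
  fixes J :: "real \<Rightarrow> real" and t :: real
  assumes "prime CARD('p::finite)"
    and "\<forall>r\<in>{0..1}. J r \<ge> 0"
    and "qp_int (\<lambda>x::'p qp. if qp_norm x \<le> 1 then complex_of_real (J (qp_norm x)) else 0) = 1"
    and "t > 0"
  shows "\<forall>\<phi> :: 'p qp \<Rightarrow> complex.
           qp_test \<phi> \<and> (\<forall>x. \<phi> x \<noteq> 0 \<longrightarrow> 0 < qp_norm x \<and> qp_norm x \<le> 1) \<longrightarrow>
           JZ0 J t \<phi> =
           qp_int (\<lambda>x. (\<Sum>j. exp (- (complex_of_real t * (1 - Jhat_at J TYPE('p) (Suc j))))
                              * (Jhat_at J TYPE('p) (Suc j) - 1)
                              * (of_nat CARD('p) ^ Suc j * Omega (real CARD('p) ^ Suc j * qp_norm x)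
                                 - of_nat CARD('p) ^ j * Omega (real CARD('p) ^ j * qp_norm x)))
                        * \<phi> x)"
proof (intro allI impI)
  fix \<phi> :: "'p qp \<Rightarrow> complex"
  assume "qp_test \<phi> \<and> (\<forall>x. \<phi> x \<noteq> 0 \<longrightarrow> 0 < qp_norm x \<and> qp_norm x \<le> 1)"
  then obtain L where \<phi>: "sample_regular L \<phi>"
    using qp_test_sample_regular[OF assms(1)] by blast
  have "\<forall>\<^sub>F n in sequentially. riemann_sum (\<lambda>\<xi>. Z0_symbol J t \<xi> * qp_ift \<phi> \<xi>) n =
                             riemann_sum (\<lambda>x. Z0_series J t x * \<phi> x) n"
    using riemann_sum_Z0_symbol_ift[OF assms(1,3) \<phi>] riemann_sum_Z0_series[OF assms(1) \<phi>]
    by (intro eventually_sequentiallyI[of L]) simp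
  then have "qp_int (\<lambda>\<xi>. Z0_symbol J t \<xi> * qp_ift \<phi> \<xi>) = qp_int (\<lambda>x. Z0_series J t x * \<phi> x)"
    by (rule qp_int_eventually_cong)
  then show "JZ0 J t \<phi> = qp_int (\<lambda>x. (\<Sum>j. exp (- (complex_of_real t * (1 - Jhat_at J TYPE('p) (Suc j))))
                              * (Jhat_at J TYPE('p) (Suc j) - 1)
                              * (of_nat CARD('p) ^ Suc j * Omega (real CARD('p) ^ Suc j * qp_norm x)
                                 - of_nat CARD('p) ^ j * Omega (real CARD('p) ^ j * qp_norm x)))
                        * \<phi> x)"
    unfolding JZ0_def Z0_symbol_def Z0_series_def Z0_coeff_def .
qed

end
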